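(* Consider binary data $(x,y^* )$ with real covariate $x$ and true label $y^*\in\{0,1\}$, $p_k^*=\mathbb{P}(y^*=k)>0$, where covariates with true label $k$ have density $f_k^*$; let $X_k^*\sim f_k^*$ and assume $\mathbb{E}|X_k^*|<\infty$, $\mathbb{E}[X_1^*]>0$, $\mathbb{E}[X_0^*]<0$, $\mathbb{P}(X_1^*<0)>0$, $\mathbb{P}(X_0^*>0)>0$. Suppose observed labels $y$ arise by flipping each true label to the other class, independently across observations, with a probability that may depend on the true label and on $x$. Let $p_k=\mathbb{P}(y=k)$, let $X_k$ have the law of $x$ given $y=k$, and let $X$ have the (unconditional) law of $x$. Assume (iii) $\mathbb{E}[X_1^*]\ge\mathbb{E}[X_1]$ and $\mathbb{E}[X_0^*]\le\mathbb{E}[X_0]$; (iv) $p_1^*\mathbb{E}[X_1^*]-p_0^*\mathbb{E}[X_0^*]>p_1\mathbb{E}[X_1]-p_0\mathbb{E}[X_0]$. Define \[ \mathcal{L}^*(s)=s\big(p_1^*\mathbb{E}[X_1^*]-p_0^*\mathbb{E}[X_0^*]\big)-\mathbb{E}\big[\log(e^{sX}+e^{-sX})\big],\quad \mathcal{L}(s)=s\big(p_1\mathbb{E}[X_1]-p_0\mathbb{E}[X_0]\big)-\mathbb{E}\big[\log(e^{sX}+e^{-sX})\big], \] and suppose $\mathcal{L}^*$ and $\mathcal{L}$ attain their maxima over $s\in\mathbb{R}$ at $\hat s^*$ and $\hat s$ respectively. Then $\hat s<\hat s^*$.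
   Context: The model is one-dimensional logistic regression without intercept, $\mathbb{P}(y^*=1\mid x)=e^{sx}/(e^{sx}+e^{-sx})$; $\mathcal{L}^*$ and $\mathcal{L}$ are the large-sample limits of the normalised log-likelihoods on clean and on mislabelled data, so $\hat s^*$ and $\hat s$ are the limiting standard logistic regression estimates of $s$ from clean and noisy data. *)

theory Defs
  imports "HOL-Probability.Probability"
begin

text \<open>Large-sample normalised log-likelihood of the no-intercept logistic model
  P(y=1|x) = e^{sx}/(e^{sx}+e^{-sx}):  L(s) = s*c - E[log(e^{sX}+e^{-sX})],
  where c = p_1 E[X_1] - p_0 E[X_0].\<close>
definition logit_obj :: "'a measure \<Rightarrow> ('a \<Rightarrow> real) \<Rightarrow> real \<Rightarrow> real \<Rightarrow> real" where
  "logit_obj M X c s = s * c - (\<integral>\<omega>. ln (exp (s * X \<omega>) + exp (- (s * X \<omega>))) \<partial>M)"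

end

theory Submission
  imports Defs "HOL-Real_Asymp.Real_Asymp"
begin

text \<open>Both objectives are \<open>s \<mapsto> s c - G s\<close> with the same convex \<open>G s = E[log (e^{sX} + e^{-sX})]\<close>
  and tilts \<open>c* > c\<close> (hypothesis (iv)). Comparing each maximiser against the other gives
  \<open>(s* - s) (c* - c) \<ge> 0\<close>, so \<open>s \<le> s*\<close>. If the two maximisers coincided at \<open>t\<close>, testing
  \<open>t + h\<close> against \<open>c*\<close> and \<open>t - h\<close> against \<open>c\<close> would give
  \<open>h (c* - c) \<le> G (t + h) + G (t - h) - 2 G t\<close> for all \<open>h > 0\<close>; but this second difference
  is \<open>o(h)\<close>, because pointwise it is at most \<open>min (sinh\<^sup>2 (h X)) (2 h |X|)\<close> and dominated
  convergence applies once \<open>X\<close> is integrable.\<close>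

definition log_partition :: "real \<Rightarrow> real" where
  "log_partition y = ln (exp y + exp (- y))"

definition mean_log_partition :: "'a measure \<Rightarrow> ('a \<Rightarrow> real) \<Rightarrow> real \<Rightarrow> real" where
  "mean_log_partition M X s = (\<integral>\<omega>. log_partition (s * X \<omega>) \<partial>M)"

lemma logit_obj_eq_mean_log_partition:
  "logit_obj M X c s = s * c - mean_log_partition M X s"
  by (simp add: logit_obj_def mean_log_partition_def log_partition_def)

lemma log_partition_eq_ln_cosh: "log_partition y = ln 2 + ln (cosh y)"
proof -
  have "exp y + exp (- y) = 2 * cosh y"
    by (simp add: cosh_def)
  then show ?thesis
    by (simp add: log_partition_def ln_mult)
qed

lemma abs_le_log_partition: "\<bar>y\<bar> \<le> log_partition y"
proof -
  have "exp \<bar>y\<bar> \<le> exp y + exp (- y)"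
    by (cases "y \<ge> 0") (simp_all add: add_increasing2 add_increasing)
  then have "ln (exp \<bar>y\<bar>) \<le> ln (exp y + exp (- y))"
    by (subst ln_le_cancel_iff) (simp_all add: add_pos_pos)
  then show ?thesis
    by (simp add: log_partition_def)
qed

lemma log_partition_add_le: "log_partition (a + b) \<le> log_partition a + \<bar>b\<bar>"
proof -
  have "exp (a + b) \<le> exp \<bar>b\<bar> * exp a" "exp (- (a + b)) \<le> exp \<bar>b\<bar> * exp (- a)"
    by (simp_all flip: exp_add)
  then have "exp (a + b) + exp (- (a + b)) \<le> exp \<bar>b\<bar> * (exp a + exp (- a))"
    by (simp add: distrib_left)
  then have "log_partition (a + b) \<le> ln (exp \<bar>b\<bar> * (exp a + exp (- a)))"
    by (simp add: log_partition_def add_pos_pos)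
  also have "\<dots> = \<bar>b\<bar> + log_partition a"
    using add_pos_pos[OF exp_gt_zero exp_gt_zero, of a "- a"]
    by (simp add: ln_mult log_partition_def)
  finally show ?thesis
    by simp
qed

lemma log_partition_nonneg: "0 \<le> log_partition y"
  using abs_le_log_partition[of y] by linarith

lemma log_partition_le: "log_partition y \<le> \<bar>y\<bar> + ln 2"
  using log_partition_add_le[of 0 y] by (simp add: log_partition_def)

lemma cosh_add_mult_cosh_diff: "cosh (a + b) * cosh (a - b) = cosh a ^ 2 + sinh b ^ 2"
  for a b :: real
proof -
  have "cosh (a + b) * cosh (a - b) = cosh a ^ 2 * cosh b ^ 2 - sinh a ^ 2 * sinh b ^ 2"
    by (simp add: cosh_add cosh_diff power2_eq_square algebra_simps)
  then show ?thesis
    using cosh_square_eq[of a] cosh_square_eq[of b] by (simp add: algebra_simps)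
qed

lemma log_partition_second_difference_eq:
  "log_partition (a + b) + log_partition (a - b) - 2 * log_partition a
     = ln (1 + (sinh b / cosh a) ^ 2)"
proof -
  have "log_partition (a + b) + log_partition (a - b) - 2 * log_partition a
      = ln (cosh (a + b) * cosh (a - b)) - ln (cosh a ^ 2)"
    by (simp add: log_partition_eq_ln_cosh ln_mult ln_realpow)
  also have "\<dots> = ln ((cosh a ^ 2 + sinh b ^ 2) / cosh a ^ 2)"
    by (simp add: cosh_add_mult_cosh_diff ln_divide_pos add_pos_nonneg)
  finally show ?thesis
    by (simp add: add_divide_distrib power_divide)
qed

lemma log_partition_second_difference_nonneg:
  "0 \<le> log_partition (a + b) + log_partition (a - b) - 2 * log_partition a"
  by (simp add: log_partition_second_difference_eq)

lemma log_partition_second_difference_le: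
  assumes "h > 0"
  shows "log_partition ((t + h) * x) + log_partition ((t - h) * x) - 2 * log_partition (t * x)
           \<le> h * min (sinh (h * x) ^ 2 / h) (2 * \<bar>x\<bar>)"
proof -
  let ?D = "log_partition (t * x + h * x) + log_partition (t * x - h * x) - 2 * log_partition (t * x)"
  have "?D \<le> (sinh (h * x) / cosh (t * x)) ^ 2"
    unfolding log_partition_second_difference_eq by (rule ln_add_one_self_le_self) simp
  also have "\<dots> \<le> sinh (h * x) ^ 2"
    using cosh_real_ge_1[of "t * x"]
    by (simp add: power_divide divide_le_eq mult_le_cancel_left1 one_le_power)
  finally have "?D \<le> sinh (h * x) ^ 2" .
  moreover have "?D \<le> h * (2 * \<bar>x\<bar>)"
    using log_partition_add_le[of "t * x" "h * x"] log_partition_add_le[of "t * x" "- (h * x)"] assms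
    by (simp add: abs_mult)
  ultimately have "?D \<le> min (sinh (h * x) ^ 2) (h * (2 * \<bar>x\<bar>))"
    by simp
  also have "\<dots> = h * min (sinh (h * x) ^ 2 / h) (2 * \<bar>x\<bar>)"
    using assms by (simp add: min_mult_distrib_left)
  finally show ?thesis
    by (simp add: algebra_simps)
qed

lemma borel_measurable_log_partition [measurable]: "log_partition \<in> borel_measurable borel"
  unfolding log_partition_def by measurable

lemma borel_measurable_sinh [measurable]: "(sinh :: real \<Rightarrow> real) \<in> borel_measurable borel"
  by (intro borel_measurable_continuous_onI continuous_at_imp_continuous_on) (simp add: isCont_sinh)

lemma integrable_log_partition_scaled:
  fixes X :: "'a \<Rightarrow> real"
  assumes "finite_measure M" "integrable M X"
  shows "integrable M (\<lambda>\<omega>. log_partition (s * X \<omega>))"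
proof (rule Bochner_Integration.integrable_bound)
  show "integrable M (\<lambda>\<omega>. \<bar>s\<bar> * \<bar>X \<omega>\<bar> + ln 2)"
    using assms by (simp add: finite_measure.integrable_const)
  show "(\<lambda>\<omega>. log_partition (s * X \<omega>)) \<in> borel_measurable M"
    using assms(2) by measurable
  show "AE \<omega> in M. norm (log_partition (s * X \<omega>)) \<le> norm (\<bar>s\<bar> * \<bar>X \<omega>\<bar> + ln 2)"
    using log_partition_nonneg[of "s * X _"] log_partition_le[of "s * X _"]
    by (intro AE_I2) (simp add: abs_mult)
qed

lemma tendsto_min_sinh_square:
  fixes x :: real
  shows "((\<lambda>h. min (sinh (h * x) ^ 2 / h) (2 * \<bar>x\<bar>)) \<longlongrightarrow> 0) (at_right 0)"
proof -
  have "((\<lambda>h. sinh (h * x) ^ 2 / h) \<longlongrightarrow> 0) (at_right 0)"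
  proof -
    consider "x > 0" | "x < 0" | "x = 0"
      by linarith
    then show ?thesis
      by cases (real_asymp, real_asymp, simp)
  qed
  then show ?thesis
    using tendsto_min[OF _ tendsto_const, of _ 0 _ "2 * \<bar>x\<bar>"] by simp
qed

lemma tendsto_integral_min_sinh_square:
  fixes X :: "'a \<Rightarrow> real"
  assumes "integrable M X"
  shows "((\<lambda>h. \<integral>\<omega>. min (sinh (h * X \<omega>) ^ 2 / h) (2 * \<bar>X \<omega>\<bar>) \<partial>M) \<longlongrightarrow> 0) (at_right 0)"
proof (rule tendsto_at_right_sequentially[of 0 1])
  fix S :: "nat \<Rightarrow> real"
  assume S_pos: "\<And>n. 0 < S n" and "S \<longlonglongrightarrow> 0"
  then have "filterlim S (at_right 0) sequentially"
    by (simp add: tendsto_imp_filterlim_at_right)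
  have X_meas [measurable]: "X \<in> borel_measurable M"
    using assms by simp
  have "(\<lambda>n. \<integral>\<omega>. min (sinh (S n * X \<omega>) ^ 2 / S n) (2 * \<bar>X \<omega>\<bar>) \<partial>M) \<longlonglongrightarrow> (\<integral>\<omega>. 0 \<partial>M)"
  proof (rule integral_dominated_convergence[where w = "\<lambda>\<omega>. 2 * \<bar>X \<omega>\<bar>"])
    show "integrable M (\<lambda>\<omega>. 2 * \<bar>X \<omega>\<bar>)"
      using assms by simp
    show "AE \<omega> in M. (\<lambda>n. min (sinh (S n * X \<omega>) ^ 2 / S n) (2 * \<bar>X \<omega>\<bar>)) \<longlonglongrightarrow> 0"
      using filterlim_compose[OF tendsto_min_sinh_square \<open>filterlim S (at_right 0) sequentially\<close>]
      by simp
    show "AE \<omega> in M. norm (min (sinh (S n * X \<omega>) ^ 2 / S n) (2 * \<bar>X \<omega>\<bar>)) \<le> 2 * \<bar>X \<omega>\<bar>" for n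
      using S_pos[of n] by (intro AE_I2) (simp add: abs_le_iff min_def)
  qed simp_all
  then show "(\<lambda>n. \<integral>\<omega>. min (sinh (S n * X \<omega>) ^ 2 / S n) (2 * \<bar>X \<omega>\<bar>) \<partial>M) \<longlonglongrightarrow> 0"
    by simp
qed simp

lemma mean_log_partition_second_difference_tendsto:
  assumes "finite_measure M" "integrable M X"
  defines "G \<equiv> mean_log_partition M X"
  shows "((\<lambda>h. (G (t + h) + G (t - h) - 2 * G t) / h) \<longlongrightarrow> 0) (at_right 0)"
proof (rule tendsto_sandwich)
  let ?D = "\<lambda>h \<omega>. log_partition ((t + h) * X \<omega>) + log_partition ((t - h) * X \<omega>)
                 - 2 * log_partition (t * X \<omega>)"
  let ?g = "\<lambda>h \<omega>. min (sinh (h * X \<omega>) ^ 2 / h) (2 * \<bar>X \<omega>\<bar>)"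
  have X_meas [measurable]: "X \<in> borel_measurable M"
    using assms by simp
  note integrable_lp = integrable_log_partition_scaled[OF assms(1,2)]
  have G_second_difference: "G (t + h) + G (t - h) - 2 * G t = (\<integral>\<omega>. ?D h \<omega> \<partial>M)" for h
    unfolding G_def mean_log_partition_def
    by (simp add: integrable_lp Bochner_Integration.integral_diff Bochner_Integration.integral_add)
  have quotient_bounds: "0 \<le> (G (t + h) + G (t - h) - 2 * G t) / h \<and>
      (G (t + h) + G (t - h) - 2 * G t) / h \<le> (\<integral>\<omega>. ?g h \<omega> \<partial>M)" if "h > 0" for h
  proof -
    have "integrable M (?g h)"
      by (rule Bochner_Integration.integrable_bound[where f = "\<lambda>\<omega>. 2 * \<bar>X \<omega>\<bar>"])
         (use assms(2) that in \<open>auto simp: abs_le_iff min_def\<close>)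
    then have "(\<integral>\<omega>. ?D h \<omega> \<partial>M) \<le> (\<integral>\<omega>. h * ?g h \<omega> \<partial>M)"
      using integrable_lp log_partition_second_difference_le[OF that]
      by (intro integral_mono) auto
    also have "\<dots> = (\<integral>\<omega>. ?g h \<omega> \<partial>M) * h"
      by (simp add: mult.commute)
    finally have "(\<integral>\<omega>. ?D h \<omega> \<partial>M) \<le> (\<integral>\<omega>. ?g h \<omega> \<partial>M) * h" .
    moreover have "0 \<le> (\<integral>\<omega>. ?D h \<omega> \<partial>M)"
      using log_partition_second_difference_nonneg[of "t * X _" "h * X _"]
      by (intro integral_nonneg_AE AE_I2) (simp add: algebra_simps)
    ultimately show ?thesis
      unfolding G_second_difference pos_divide_le_eq[OF that] using that by simp
  qed
  show "\<forall>\<^sub>F h in at_right 0. 0 \<le> (G (t + h) + G (t - h) - 2 * G t) / h"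
    "\<forall>\<^sub>F h in at_right 0. (G (t + h) + G (t - h) - 2 * G t) / h \<le> (\<integral>\<omega>. ?g h \<omega> \<partial>M)"
    using quotient_bounds by (auto intro: eventually_at_rightI[of 0 1])
  show "((\<lambda>h. \<integral>\<omega>. ?g h \<omega> \<partial>M) \<longlongrightarrow> 0) (at_right 0)"
    by (rule tendsto_integral_min_sinh_square[OF assms(2)])
qed simp

lemma maximiser_tilted_strict_mono:
  fixes G :: "real \<Rightarrow> real"
  assumes "c < c'"
    and max: "\<And>s. s * c - G s \<le> t * c - G t"
    and max': "\<And>s. s * c' - G s \<le> t' * c' - G t'"
    and smooth: "((\<lambda>h. (G (t + h) + G (t - h) - 2 * G t) / h) \<longlongrightarrow> 0) (at_right 0)"
  shows "t < t'"
proof -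
  have "0 \<le> (t' - t) * (c' - c)"
    using max[of t'] max'[of t] by (simp add: algebra_simps)
  with \<open>c < c'\<close> have "t \<le> t'"
    by (simp add: zero_le_mult_iff)
  moreover have "t \<noteq> t'"
  proof
    assume "t = t'"
    have "c' - c \<le> (G (t + h) + G (t - h) - 2 * G t) / h" if "h > 0" for h
      using max[of "t - h"] max'[of "t + h"] \<open>t = t'\<close> that
      by (simp add: le_divide_eq algebra_simps)
    then have "\<forall>\<^sub>F h in at_right 0. c' - c \<le> (G (t + h) + G (t - h) - 2 * G t) / h"
      by (intro eventually_at_rightI[of 0 1]) auto
    with smooth have "c' - c \<le> 0"
      by (intro tendsto_lowerbound) auto
    with \<open>c < c'\<close> show False
      by simp
  qed
  ultimately show ?thesis
    by simp
qed

lemma integrable_uniform_measure_iff: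
  fixes f :: "'a \<Rightarrow> real"
  assumes "finite_measure M" "A \<in> sets M" "measure M A > 0" "f \<in> borel_measurable M"
  shows "integrable (uniform_measure M A) f \<longleftrightarrow> integrable M (\<lambda>x. indicator A x * f x)"
proof -
  have "emeasure M A = ennreal (measure M A)"
    using assms(1) by (simp add: finite_measure.emeasure_eq_measure)
  then have "(\<lambda>x. indicator A x / emeasure M A) = (\<lambda>x. ennreal (indicator A x / measure M A))"
    using assms(3) by (auto simp: fun_eq_iff indicator_def divide_ennreal[symmetric])
  then have "uniform_measure M A = density M (\<lambda>x. ennreal (indicator A x / measure M A))"
    by (simp add: uniform_measure_def)
  then have "integrable (uniform_measure M A) f \<longleftrightarrow>
      integrable M (\<lambda>x. (1 / measure M A) * (indicator A x * f x))"
    using assms(2,3,4) by (simp add: integrable_density)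
  then show ?thesis
    using assms(3) integrable_mult_left_iff[of M "1 / measure M A" "\<lambda>x. indicator A x * f x"]
    by simp
qed

lemma integrable_of_integrable_uniform_measures:
  fixes f :: "'a \<Rightarrow> real"
  assumes "finite_measure M" "f \<in> borel_measurable M" "{x \<in> space M. P x} \<in> sets M"
    and "measure M {x \<in> space M. P x} > 0" "measure M {x \<in> space M. \<not> P x} > 0"
    and "integrable (uniform_measure M {x \<in> space M. P x}) f"
    and "integrable (uniform_measure M {x \<in> space M. \<not> P x}) f"
  shows "integrable M f"
proof -
  have compl: "{x \<in> space M. \<not> P x} \<in> sets M"
    using sets.sets_Collect_neg[OF assms(3)] .
  have "integrable M (\<lambda>x. indicator {x \<in> space M. P x} x * f x
                          + indicator {x \<in> space M. \<not> P x} x * f x)"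
    using integrable_uniform_measure_iff[OF assms(1,3,4,2)] assms(6)
      integrable_uniform_measure_iff[OF assms(1) compl assms(5,2)] assms(7)
    by (intro Bochner_Integration.integrable_add) simp_all
  then show ?thesis
    by (rule Bochner_Integration.integrable_cong[OF refl, THEN iffD1, rotated]) (auto simp: indicator_def)
qed

theorem proposition2:
  fixes M :: "'a measure" and X :: "'a \<Rightarrow> real" and Ys Y :: "'a \<Rightarrow> bool"
    and s_hat_star s_hat :: real
  assumes ps: "prob_space M"
    and X_meas: "X \<in> borel_measurable M"
    and Ys_ev: "{\<omega> \<in> space M. Ys \<omega>} \<in> sets M"
    and Y_ev: "{\<omega> \<in> space M. Y \<omega>} \<in> sets M"
    and p1s_pos: "measure M {\<omega> \<in> space M. Ys \<omega>} > 0"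
    and p0s_pos: "measure M {\<omega> \<in> space M. \<not> Ys \<omega>} > 0"
    and p1_pos: "measure M {\<omega> \<in> space M. Y \<omega>} > 0"
    and p0_pos: "measure M {\<omega> \<in> space M. \<not> Y \<omega>} > 0"
    and dens1: "\<exists>f. distributed (uniform_measure M {\<omega> \<in> space M. Ys \<omega>}) lborel X f"
    and dens0: "\<exists>f. distributed (uniform_measure M {\<omega> \<in> space M. \<not> Ys \<omega>}) lborel X f"
    and int1: "integrable (uniform_measure M {\<omega> \<in> space M. Ys \<omega>}) X"
    and int0: "integrable (uniform_measure M {\<omega> \<in> space M. \<not> Ys \<omega>}) X"
    and mean1: "(\<integral>\<omega>. X \<omega> \<partial>uniform_measure M {\<omega> \<in> space M. Ys \<omega>}) > 0"
    and mean0: "(\<integral>\<omega>. X \<omega> \<partial>uniform_measure M {\<omega> \<in> space M. \<not> Ys \<omega>}) < 0"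
    and neg1: "measure (uniform_measure M {\<omega> \<in> space M. Ys \<omega>}) {\<omega> \<in> space M. X \<omega> < 0} > 0"
    and pos0: "measure (uniform_measure M {\<omega> \<in> space M. \<not> Ys \<omega>}) {\<omega> \<in> space M. X \<omega> > 0} > 0"
    and iii1: "(\<integral>\<omega>. X \<omega> \<partial>uniform_measure M {\<omega> \<in> space M. Ys \<omega>})
               \<ge> (\<integral>\<omega>. X \<omega> \<partial>uniform_measure M {\<omega> \<in> space M. Y \<omega>})"
    and iii0: "(\<integral>\<omega>. X \<omega> \<partial>uniform_measure M {\<omega> \<in> space M. \<not> Ys \<omega>})
               \<le> (\<integral>\<omega>. X \<omega> \<partial>uniform_measure M {\<omega> \<in> space M. \<not> Y \<omega>})"
    and iv: "measure M {\<omega> \<in> space M. Ys \<omega>} * (\<integral>\<omega>. X \<omega> \<partial>uniform_measure M {\<omega> \<in> space M. Ys \<omega>})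
             - measure M {\<omega> \<in> space M. \<not> Ys \<omega>} * (\<integral>\<omega>. X \<omega> \<partial>uniform_measure M {\<omega> \<in> space M. \<not> Ys \<omega>})
           > measure M {\<omega> \<in> space M. Y \<omega>} * (\<integral>\<omega>. X \<omega> \<partial>uniform_measure M {\<omega> \<in> space M. Y \<omega>})
             - measure M {\<omega> \<in> space M. \<not> Y \<omega>} * (\<integral>\<omega>. X \<omega> \<partial>uniform_measure M {\<omega> \<in> space M. \<not> Y \<omega>})"
    and max_star: "\<forall>s. logit_obj M X
             (measure M {\<omega> \<in> space M. Ys \<omega>} * (\<integral>\<omega>. X \<omega> \<partial>uniform_measure M {\<omega> \<in> space M. Ys \<omega>})
              - measure M {\<omega> \<in> space M. \<not> Ys \<omega>} * (\<integral>\<omega>. X \<omega> \<partial>uniform_measure M {\<omega> \<in> space M. \<not> Ys \<omega>})) s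
           \<le> logit_obj M X
             (measure M {\<omega> \<in> space M. Ys \<omega>} * (\<integral>\<omega>. X \<omega> \<partial>uniform_measure M {\<omega> \<in> space M. Ys \<omega>})
              - measure M {\<omega> \<in> space M. \<not> Ys \<omega>} * (\<integral>\<omega>. X \<omega> \<partial>uniform_measure M {\<omega> \<in> space M. \<not> Ys \<omega>})) s_hat_star"
    and max_obs: "\<forall>s. logit_obj M X
             (measure M {\<omega> \<in> space M. Y \<omega>} * (\<integral>\<omega>. X \<omega> \<partial>uniform_measure M {\<omega> \<in> space M. Y \<omega>})
              - measure M {\<omega> \<in> space M. \<not> Y \<omega>} * (\<integral>\<omega>. X \<omega> \<partial>uniform_measure M {\<omega> \<in> space M. \<not> Y \<omega>})) s
           \<le> logit_obj M X
             (measure M {\<omega> \<in> space M. Y \<omega>} * (\<integral>\<omega>. X \<omega> \<partial>uniform_measure M {\<omega> \<in> space M. Y \<omega>})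
              - measure M {\<omega> \<in> space M. \<not> Y \<omega>} * (\<integral>\<omega>. X \<omega> \<partial>uniform_measure M {\<omega> \<in> space M. \<not> Y \<omega>})) s_hat"
  shows "s_hat < s_hat_star"
proof -
  have fin: "finite_measure M"
    using ps by (simp add: prob_space_def)
  have "integrable M X"
    using integrable_of_integrable_uniform_measures[OF fin X_meas Ys_ev p1s_pos p0s_pos int1 int0] .
  then have "((\<lambda>h. (mean_log_partition M X (s_hat + h) + mean_log_partition M X (s_hat - h)
                 - 2 * mean_log_partition M X s_hat) / h) \<longlongrightarrow> 0) (at_right 0)"
    using fin by (intro mean_log_partition_second_difference_tendsto)
  from maximiser_tilted_strict_mono[OF iv
      max_obs[unfolded logit_obj_eq_mean_log_partition, rule_format]
      max_star[unfolded logit_obj_eq_mean_log_partition, rule_format] this]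
  show ?thesis .
qed

end
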